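(* Let $D$ be a knot diagram that is ascending from a base point $b$. If a $2$-sided face of $D$ does not admit a Reidemeister II move, or a $3$-sided face of $D$ does not admit a Reidemeister III move, then $b$ lies on the boundary of that face. Moreover, there are at most two such faces in $D$.
   Context: An oriented knot diagram is ascending from a point $b$ (not a crossing) if, travelling along the knot from $b$ in the direction of the orientation, every crossing is first met along its under-strand and later along its over-strand. A $2$-sided face admits a Reidemeister II move when one of its two edges is the over-strand at both of its crossings; a $3$-sided face admits a Reidemeister III move when one of its three edges is the over-strand at both of its crossings (equivalently, it is not the case that each edge has one over- and one under-crossing). *)

theory Defs
  imports Main
begin

text \<open>
Travelling once around the knot we pass through crossings at the positions
0, ..., N-1 (N = 2 * number of crossings).  cr i is the crossing met at
position i, ov i says whether the knot passes over at position i,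
lr i says whether the other strand at that crossing passes from the right to
the left of the strand traversed at position i.  Edge e (e < N) is the arc of
the knot from position e to position (e+1) mod N.
Darts are pairs (e, d): edge e traversed forwards (d = True) or backwards.
The rotation system sigma (counter-clockwise order of half-edges at a crossing)
is determined by lr; faces are the orbits of the face-tracing permutation
sigma o alpha; planarity is expressed by Euler's formula V - E + F = 2.
\<close>

definition nxt :: "nat \<Rightarrow> nat \<Rightarrow> nat" where
  "nxt N i = (Suc i) mod N"

definition prv :: "nat \<Rightarrow> nat \<Rightarrow> nat" where
  "prv N i = (i + N - 1) mod N"

definition partner :: "nat \<Rightarrow> (nat \<Rightarrow> 'c) \<Rightarrow> nat \<Rightarrow> nat" where
  "partner N cr i = (THE j. j < N \<and> j \<noteq> i \<and> cr j = cr i)"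

definition darts :: "nat \<Rightarrow> (nat \<times> bool) set" where
  "darts N = {..<N} \<times> UNIV"

definition alpha :: "nat \<times> bool \<Rightarrow> nat \<times> bool" where
  "alpha d = (fst d, \<not> snd d)"

text \<open>Dart (i, True) leaves the crossing at position i along edge i;
dart (prv i, False) leaves it backwards along edge prv i.\<close>
definition sigma :: "nat \<Rightarrow> (nat \<Rightarrow> 'c) \<Rightarrow> (nat \<Rightarrow> bool) \<Rightarrow> nat \<times> bool \<Rightarrow> nat \<times> bool" where
  "sigma N cr lr d =
     (if snd d then
        (let i = fst d; j = partner N cr i in
           if lr i then (j, True) else (prv N j, False))
      else
        (let i = nxt N (fst d); j = partner N cr i in
           if lr i then (prv N j, False) else (j, True)))"

definition phi :: "nat \<Rightarrow> (nat \<Rightarrow> 'c) \<Rightarrow> (nat \<Rightarrow> bool) \<Rightarrow> nat \<times> bool \<Rightarrow> nat \<times> bool" where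
  "phi N cr lr d = sigma N cr lr (alpha d)"

definition face_of :: "nat \<Rightarrow> (nat \<Rightarrow> 'c) \<Rightarrow> (nat \<Rightarrow> bool) \<Rightarrow> nat \<times> bool \<Rightarrow> (nat \<times> bool) set" where
  "face_of N cr lr d = {(phi N cr lr ^^ k) d | k. True}"

definition faces :: "nat \<Rightarrow> (nat \<Rightarrow> 'c) \<Rightarrow> (nat \<Rightarrow> bool) \<Rightarrow> (nat \<times> bool) set set" where
  "faces N cr lr = face_of N cr lr ` darts N"

definition knot_diagram :: "nat \<Rightarrow> (nat \<Rightarrow> 'c) \<Rightarrow> (nat \<Rightarrow> bool) \<Rightarrow> (nat \<Rightarrow> bool) \<Rightarrow> bool" where
  "knot_diagram N cr ov lr \<longleftrightarrow>
     (\<forall>i<N. card {j. j < N \<and> cr j = cr i} = 2) \<and>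
     (\<forall>i<N. \<forall>j<N. i \<noteq> j \<and> cr i = cr j \<longrightarrow> ov i \<noteq> ov j \<and> lr i \<noteq> lr j) \<and>
     card (faces N cr lr) = card (cr ` {..<N}) + 2"

text \<open>Travel distance from the base point on edge b to position i:
position nxt b is met first (distance 0).\<close>
definition dist_from :: "nat \<Rightarrow> nat \<Rightarrow> nat \<Rightarrow> nat" where
  "dist_from N b i = (i + (N - 1 - b)) mod N"

definition ascending :: "nat \<Rightarrow> (nat \<Rightarrow> 'c) \<Rightarrow> (nat \<Rightarrow> bool) \<Rightarrow> nat \<Rightarrow> bool" where
  "ascending N cr ov b \<longleftrightarrow> b < N \<and>
     (\<forall>i<N. \<forall>j<N. i \<noteq> j \<and> cr i = cr j \<and> dist_from N b i < dist_from N b j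
        \<longrightarrow> \<not> ov i \<and> ov j)"

definition over_both :: "nat \<Rightarrow> (nat \<Rightarrow> bool) \<Rightarrow> nat \<Rightarrow> bool" where
  "over_both N ov e \<longleftrightarrow> ov e \<and> ov (nxt N e)"

definition admits_RII :: "nat \<Rightarrow> (nat \<Rightarrow> bool) \<Rightarrow> (nat \<times> bool) set \<Rightarrow> bool" where
  "admits_RII N ov F \<longleftrightarrow> card F = 2 \<and> (\<exists>d\<in>F. over_both N ov (fst d))"

definition admits_RIII :: "nat \<Rightarrow> (nat \<Rightarrow> bool) \<Rightarrow> (nat \<times> bool) set \<Rightarrow> bool" where
  "admits_RIII N ov F \<longleftrightarrow> card F = 3 \<and> (\<exists>d\<in>F. over_both N ov (fst d))"

definition bad_face :: "nat \<Rightarrow> (nat \<Rightarrow> bool) \<Rightarrow> (nat \<times> bool) set \<Rightarrow> bool" where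
  "bad_face N ov F \<longleftrightarrow>
     (card F = 2 \<and> \<not> admits_RII N ov F) \<or> (card F = 3 \<and> \<not> admits_RIII N ov F)"

end

theory Submission
  imports Defs "HOL-Combinatorics.Orbits"
begin

text \<open>
Measure positions by their travel distance \<open>\<delta>\<close> from the base point. Going around a face, each
corner passes, at one crossing, from the head of an edge to the tail of the next edge, and
ascendingness says that the head is the over-strand there iff the next tail is reached earlier.
If no edge of the face is over at both ends, a head can only be over if the previous head is, so
around the cycle either all heads are over or none is. If moreover the face avoids \<open>b\<close>, each of
its edges changes \<open>\<delta>\<close> by one in its direction of travel; hence the distances of the tails are
monotone around the face, so constant, and the face consists of a single dart. A 2- or 3-sided
face admitting no Reidemeister move therefore touches the edge of \<open>b\<close>, and only the two faces
on either side of that edge can do so.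
\<close>

lemma monotone_periodic_const:
  fixes f :: "nat \<Rightarrow> 'a"
  assumes mono: "monotone (\<le>) R f" and "antisymp R"
    and "0 < p" and periodic: "\<And>k. f (k + p) = f k"
  shows "f k = f 0"
proof -
  have "f (k * p) = f 0"
    by (induction k) (simp_all add: add.commute[of p] periodic)
  moreover have "R (f 0) (f k)"
    by (rule monotoneD[OF mono]) simp
  moreover have "R (f k) (f (k * p))"
    by (rule monotoneD[OF mono]) (use \<open>0 < p\<close> in simp)
  ultimately show ?thesis
    using antisympD[OF \<open>antisymp R\<close>] by simp
qed

lemma self_in_orbit_if_inj_on:
  assumes "finite A" "f ` A \<subseteq> A" "inj_on f A" "x \<in> A"
  shows "x \<in> orbit f x"
proof -
  have bij: "bij_betw (f ^^ n) A A" for n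
    using assms(1-3) by (intro bij_betw_funpow) (simp add: bij_betw_def endo_inj_surj)
  then have "range (\<lambda>n. (f ^^ n) x) \<subseteq> A"
    using \<open>x \<in> A\<close> by (auto dest: bij_betwE)
  then have "finite (range (\<lambda>n. (f ^^ n) x))"
    using \<open>finite A\<close> by (rule finite_subset)
  then have "\<not> inj (\<lambda>n. (f ^^ n) x)"
    using finite_imageD infinite_UNIV_nat by blast
  then obtain i j where "i < j" "(f ^^ i) x = (f ^^ j) x"
    unfolding inj_def by (metis linorder_neqE_nat)
  then have "(f ^^ i) ((f ^^ (j - i)) x) = (f ^^ i) x"
    using funpow_add[of i "j - i" f] by (simp add: fun_eq_iff)
  moreover have "(f ^^ (j - i)) x \<in> A"
    using bij \<open>x \<in> A\<close> by (auto dest: bij_betwE)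
  ultimately have "(f ^^ (j - i)) x = x"
    using bij[of i] \<open>x \<in> A\<close> unfolding bij_betw_def by (blast dest: inj_onD)
  then show ?thesis
    using \<open>i < j\<close> by (auto simp: orbit_altdef intro!: exI[of _ "j - i"])
qed

lemma nxt_eq: "e < N \<Longrightarrow> nxt N e = (if Suc e < N then Suc e else 0)"
  by (cases "Suc e = N") (auto simp: nxt_def)

lemma prv_eq: "i < N \<Longrightarrow> prv N i = (if i = 0 then N - 1 else i - 1)"
  by (cases i) (auto simp: prv_def)

lemma nxt_less: "e < N \<Longrightarrow> nxt N e < N"
  by (simp add: nxt_eq)

lemma prv_less: "i < N \<Longrightarrow> prv N i < N"
  by (simp add: prv_eq less_imp_diff_less)

lemma nxt_prv: "i < N \<Longrightarrow> nxt N (prv N i) = i"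
  by (auto simp: prv_eq nxt_eq)

lemma nxt_inject: "e < N \<Longrightarrow> f < N \<Longrightarrow> nxt N e = nxt N f \<longleftrightarrow> e = f"
  by (auto simp: nxt_eq split: if_splits)

lemma dist_from_eq:
  "b < N \<Longrightarrow> i < N \<Longrightarrow> dist_from N b i = (if b < i then i - b - 1 else i + N - 1 - b)"
  by (auto simp: dist_from_def mod_if)

lemma dist_from_inject:
  "b < N \<Longrightarrow> i < N \<Longrightarrow> j < N \<Longrightarrow> dist_from N b i = dist_from N b j \<longleftrightarrow> i = j"
  by (auto simp: dist_from_eq split: if_splits)

lemma dist_from_nxt:
  "b < N \<Longrightarrow> e < N \<Longrightarrow> e \<noteq> b \<Longrightarrow> dist_from N b (nxt N e) = Suc (dist_from N b e)"
  by (auto simp: dist_from_eq nxt_eq)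

locale diagram =
  fixes N :: nat and cr :: "nat \<Rightarrow> 'c" and ov lr :: "nat \<Rightarrow> bool"
  assumes knot_diagram: "knot_diagram N cr ov lr"
begin

abbreviation \<phi> :: "nat \<times> bool \<Rightarrow> nat \<times> bool" where
  "\<phi> \<equiv> phi N cr lr"

lemma card_same_crossing: "i < N \<Longrightarrow> card {k. k < N \<and> cr k = cr i} = 2"
  using knot_diagram unfolding knot_diagram_def by blast

lemma ex1_partner: "i < N \<Longrightarrow> \<exists>!j. j < N \<and> j \<noteq> i \<and> cr j = cr i"
proof -
  let ?S = "{k. k < N \<and> cr k = cr i}"
  assume "i < N"
  then have "card (?S - {i}) = 1"
    using card_same_crossing by (simp add: card_Diff_singleton)
  then obtain w where "?S - {i} = {w}"
    by (rule card_1_singletonE)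
  then show ?thesis
    by (intro ex1I[of _ w]) (auto simp: set_eq_iff)
qed

lemma partner:
  assumes "i < N"
  shows "partner N cr i < N" "partner N cr i \<noteq> i" "cr (partner N cr i) = cr i"
  using theI'[OF ex1_partner[OF assms]] unfolding partner_def by simp_all

lemma partner_unique: "i < N \<Longrightarrow> j < N \<Longrightarrow> j \<noteq> i \<Longrightarrow> cr j = cr i \<Longrightarrow> partner N cr i = j"
  unfolding partner_def by (rule the1_equality[OF ex1_partner]) simp_all

lemma partner_partner: "i < N \<Longrightarrow> partner N cr (partner N cr i) = i"
  using partner[of i] by (intro partner_unique) auto

lemma ov_partner:
  assumes "i < N" shows "ov (partner N cr i) \<longleftrightarrow> \<not> ov i"
proof -
  have "\<forall>i<N. \<forall>j<N. i \<noteq> j \<and> cr i = cr j \<longrightarrow> ov i \<noteq> ov j"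
    using knot_diagram unfolding knot_diagram_def by blast
  from this[rule_format, of "partner N cr i" i] show ?thesis
    using partner[OF assms] assms by simp
qed

definition tail :: "nat \<times> bool \<Rightarrow> nat" where
  "tail u = (if snd u then fst u else nxt N (fst u))"

definition head :: "nat \<times> bool \<Rightarrow> nat" where
  "head u = (if snd u then nxt N (fst u) else fst u)"

lemma tail_less: "u \<in> darts N \<Longrightarrow> tail u < N"
  by (auto simp: tail_def darts_def nxt_less)

lemma head_less: "u \<in> darts N \<Longrightarrow> head u < N"
  by (auto simp: head_def darts_def nxt_less)

lemma dart_eqI_tail: "u \<in> darts N \<Longrightarrow> v \<in> darts N \<Longrightarrow> snd u = snd v \<Longrightarrow> tail u = tail v \<Longrightarrow> u = v"
  by (cases u; cases v) (auto simp: darts_def tail_def nxt_inject split: if_splits)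

lemma dart_eqI_head: "u \<in> darts N \<Longrightarrow> v \<in> darts N \<Longrightarrow> snd u = snd v \<Longrightarrow> head u = head v \<Longrightarrow> u = v"
  by (cases u; cases v) (auto simp: darts_def head_def nxt_inject split: if_splits)

lemma over_both_iff: "over_both N ov (fst u) \<longleftrightarrow> ov (tail u) \<and> ov (head u)"
  by (auto simp: over_both_def tail_def head_def)

lemma phi_eq:
  "\<phi> u = (let i = head u; j = partner N cr i in if lr i = snd u then (prv N j, False) else (j, True))"
  by (cases u) (auto simp: phi_def sigma_def alpha_def head_def Let_def)

lemma phi_in_darts: "u \<in> darts N \<Longrightarrow> \<phi> u \<in> darts N"
  using partner(1)[OF head_less] by (auto simp: phi_eq Let_def darts_def prv_less)

lemma tail_phi: "u \<in> darts N \<Longrightarrow> tail (\<phi> u) = partner N cr (head u)"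
  using partner(1)[OF head_less] by (auto simp: phi_eq Let_def tail_def nxt_prv)

lemma snd_phi: "snd (\<phi> u) \<longleftrightarrow> lr (head u) \<noteq> snd u"
  by (auto simp: phi_eq Let_def)

lemma inj_on_phi: "inj_on \<phi> (darts N)"
proof (rule inj_onI)
  fix u v assume u: "u \<in> darts N" and v: "v \<in> darts N" and "\<phi> u = \<phi> v"
  then have "partner N cr (head u) = partner N cr (head v)"
    by (metis tail_phi)
  then have "head u = head v"
    by (metis partner_partner head_less u v)
  moreover from this have "snd u = snd v"
    using snd_phi \<open>\<phi> u = \<phi> v\<close> by metis
  ultimately show "u = v"
    using dart_eqI_head u v by blast
qed

lemma self_in_orbit_phi:
  assumes "x \<in> darts N" shows "x \<in> orbit \<phi> x"
proof -
  have "finite (darts N)"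
    by (simp add: darts_def)
  then show ?thesis
    using phi_in_darts assms by (intro self_in_orbit_if_inj_on[OF _ _ inj_on_phi]) auto
qed

lemma face_of_eq_orbit: "x \<in> orbit \<phi> x \<Longrightarrow> face_of N cr lr x = orbit \<phi> x"
  unfolding face_of_def by (rule orbit_altdef_self_in[symmetric])

lemma face_of_eq_face_of:
  assumes "x \<in> darts N" "y \<in> face_of N cr lr x"
  shows "face_of N cr lr y = face_of N cr lr x"
proof -
  have x: "x \<in> orbit \<phi> x" and y: "y \<in> orbit \<phi> x"
    using assms self_in_orbit_phi face_of_eq_orbit by auto
  then have "y \<in> orbit \<phi> y" "x \<in> orbit \<phi> y"
    by (auto intro: self_in_orbit_trans orbit_swap)
  with x y show ?thesis
    using face_of_eq_orbit by (metis orbit_trans subset_antisym subsetI)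
qed

lemma face_of_fixpoint: "\<phi> x = x \<Longrightarrow> face_of N cr lr x = {x}"
  by (metis face_of_eq_orbit orbit.base orbit_eq_singleton_iff)

lemma funpow_in_face_of: "(\<phi> ^^ k) x \<in> face_of N cr lr x"
  by (auto simp: face_of_def)

lemma funpow_phi_in_darts: "x \<in> darts N \<Longrightarrow> (\<phi> ^^ k) x \<in> darts N"
  by (induction k) (simp_all add: phi_in_darts)

lemma funpow_phi_periodic:
  assumes "x \<in> darts N"
  obtains p where "0 < p" "\<And>k. (\<phi> ^^ (k + p)) x = (\<phi> ^^ k) x"
proof -
  obtain p where "0 < p" "(\<phi> ^^ p) x = x"
    using self_in_orbit_phi[OF assms] by (auto simp: orbit_altdef)
  then show ?thesis
    using that by (simp add: funpow_add)
qed

end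

locale ascending_diagram = diagram +
  fixes b :: nat
  assumes ascending: "ascending N cr ov b"
begin

abbreviation \<delta> :: "nat \<Rightarrow> nat" where
  "\<delta> \<equiv> dist_from N b"

lemma base_less: "b < N"
  using ascending by (simp add: ascending_def)

lemma ov_iff_partner_earlier:
  assumes "i < N" shows "ov i \<longleftrightarrow> \<delta> (partner N cr i) < \<delta> i"
proof -
  let ?j = "partner N cr i"
  have "\<delta> ?j \<noteq> \<delta> i"
    using partner[OF assms] assms base_less by (simp add: dist_from_inject)
  moreover have "\<forall>i<N. \<forall>j<N. i \<noteq> j \<and> cr i = cr j \<and> \<delta> i < \<delta> j \<longrightarrow> \<not> ov i \<and> ov j"
    using ascending unfolding ascending_def by blast
  ultimately show ?thesis
    using partner[OF assms] assms by (metis linorder_neqE_nat)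
qed

lemma ov_tail_phi: "u \<in> darts N \<Longrightarrow> ov (tail (\<phi> u)) \<longleftrightarrow> \<not> ov (head u)"
  by (simp add: tail_phi ov_partner head_less)

lemma ov_head_iff: "u \<in> darts N \<Longrightarrow> ov (head u) \<longleftrightarrow> \<delta> (tail (\<phi> u)) < \<delta> (head u)"
  by (simp add: tail_phi ov_iff_partner_earlier head_less)

lemma dist_tail_phi_neq: "u \<in> darts N \<Longrightarrow> \<delta> (tail (\<phi> u)) \<noteq> \<delta> (head u)"
  using partner head_less base_less by (simp add: tail_phi dist_from_inject)

lemma dist_head_tail:
  assumes "u \<in> darts N" "fst u \<noteq> b"
  shows "if snd u then \<delta> (head u) = Suc (\<delta> (tail u)) else \<delta> (tail u) = Suc (\<delta> (head u))"
  using assms base_less by (auto simp: darts_def head_def tail_def dist_from_nxt)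

lemma ov_head_const_on_face:
  assumes x: "x \<in> darts N"
    and no_over_both: "\<And>u. u \<in> face_of N cr lr x \<Longrightarrow> \<not> over_both N ov (fst u)"
  shows "ov (head ((\<phi> ^^ k) x)) = ov (head x)"
proof -
  let ?over = "\<lambda>k. ov (head ((\<phi> ^^ k) x))"
  obtain p where "0 < p" and periodic: "\<And>k. (\<phi> ^^ (k + p)) x = (\<phi> ^^ k) x"
    using funpow_phi_periodic[OF x] by blast
  have "\<not> over_both N ov (fst ((\<phi> ^^ Suc k) x))" for k
    using no_over_both funpow_in_face_of by blast
  then have "?over (Suc k) \<le> ?over k" for k
    using ov_tail_phi[OF funpow_phi_in_darts[OF x]] by (auto simp: over_both_iff)
  then have "antimono ?over"
    unfolding antimono_iff_le_Suc by blast
  from monotone_periodic_const[OF this antisymp_on_ge \<open>0 < p\<close>] show ?thesis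
    by (simp add: periodic)
qed

lemma dist_tail_phi:
  assumes "u \<in> darts N" "fst u \<noteq> b"
  shows "if ov (head u) then \<delta> (tail (\<phi> u)) \<le> \<delta> (tail u) else \<delta> (tail u) \<le> \<delta> (tail (\<phi> u))"
    and "\<delta> (tail (\<phi> u)) = \<delta> (tail u) \<Longrightarrow> snd u \<longleftrightarrow> ov (head u)"
  using ov_head_iff[OF assms(1)] dist_tail_phi_neq[OF assms(1)] dist_head_tail[OF assms]
  by (auto split: if_splits)

lemma phi_fixpoint_if_face_avoids_base:
  assumes x: "x \<in> darts N"
    and avoid: "\<And>u. u \<in> face_of N cr lr x \<Longrightarrow> fst u \<noteq> b \<and> \<not> over_both N ov (fst u)"
  shows "\<phi> x = x"
proof -
  define u where "u k = (\<phi> ^^ k) x" for k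
  define t where "t k = \<delta> (tail (u k))" for k
  obtain p where "0 < p" and periodic: "\<And>k. u (k + p) = u k"
    using funpow_phi_periodic[OF x] unfolding u_def by blast
  have u_darts: "u k \<in> darts N" and u_avoids: "fst (u k) \<noteq> b" for k
    using funpow_phi_in_darts[OF x] avoid funpow_in_face_of unfolding u_def by blast+
  have u_Suc: "u (Suc k) = \<phi> (u k)" for k
    by (simp add: u_def)
  have over: "ov (head (u k)) = ov (head x)" for k
    using ov_head_const_on_face[OF x] avoid unfolding u_def by blast
  note step = dist_tail_phi[OF u_darts u_avoids, unfolded over, folded u_Suc t_def]
  have t_const: "t k = t 0" for k
  proof (cases "ov (head x)")
    case True
    then have "antimono t"
      using step(1) by (simp add: antimono_iff_le_Suc)
    then show ?thesis
      by (rule monotone_periodic_const[OF _ antisymp_on_ge \<open>0 < p\<close>]) (simp add: t_def periodic)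
  next
    case False
    then have "mono t"
      using step(1) by (simp add: mono_iff_le_Suc)
    then show ?thesis
      by (rule monotone_periodic_const[OF _ antisymp_on_le \<open>0 < p\<close>]) (simp add: t_def periodic)
  qed
  then have "snd (u k) = ov (head x)" for k
    using step(2)[of k] t_const[of k] t_const[of "Suc k"] by simp
  then have "snd (u 1) = snd (u 0)"
    by simp
  moreover have "tail (u 1) = tail (u 0)"
    using t_const[of 1] base_less tail_less[OF u_darts] by (simp add: t_def dist_from_inject)
  ultimately have "u 1 = u 0"
    using dart_eqI_tail[OF u_darts u_darts] by blast
  then show ?thesis
    by (simp add: u_def)
qed

lemma bad_face_contains_base:
  assumes "F \<in> faces N cr lr" "bad_face N ov F"
  shows "b \<in> fst ` F"
proof (rule ccontr)
  assume "b \<notin> fst ` F"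
  obtain x where x: "x \<in> darts N" and F: "F = face_of N cr lr x"
    using assms(1) by (auto simp: faces_def)
  have "card F = 2 \<or> card F = 3" and "\<forall>u\<in>F. \<not> over_both N ov (fst u)"
    using assms(2) by (auto simp: bad_face_def admits_RII_def admits_RIII_def)
  moreover have "\<phi> x = x"
    using phi_fixpoint_if_face_avoids_base[OF x] \<open>b \<notin> fst ` F\<close> calculation(2)
    unfolding F by force
  ultimately show False
    using face_of_fixpoint F by simp
qed

lemma card_bad_faces_le_2: "card {F \<in> faces N cr lr. bad_face N ov F} \<le> 2"
proof -
  have "{F \<in> faces N cr lr. bad_face N ov F} \<subseteq> face_of N cr lr ` {(b, True), (b, False)}"
  proof
    fix F assume F: "F \<in> {F \<in> faces N cr lr. bad_face N ov F}"
    then obtain x where "x \<in> darts N" "F = face_of N cr lr x"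
      by (auto simp: faces_def)
    moreover obtain y where "y \<in> F" "fst y = b"
      using bad_face_contains_base F by blast
    ultimately have "F = face_of N cr lr y"
      using face_of_eq_face_of by simp
    moreover have "y \<in> {(b, True), (b, False)}"
      using \<open>fst y = b\<close> by (cases y) auto
    ultimately show "F \<in> face_of N cr lr ` {(b, True), (b, False)}"
      by blast
  qed
  then have "card {F \<in> faces N cr lr. bad_face N ov F} \<le> card (face_of N cr lr ` {(b, True), (b, False)})"
    by (intro card_mono) simp_all
  also have "\<dots> \<le> 2"
    using card_image_le[of "{(b, True), (b, False)}" "face_of N cr lr"] by simp
  finally show ?thesis .
qed

end

theorem lemma5p6:
  fixes N :: nat and cr :: "nat \<Rightarrow> 'c" and ov lr :: "nat \<Rightarrow> bool" and b :: nat
  assumes "knot_diagram N cr ov lr"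
    and "ascending N cr ov b"
  shows "(\<forall>F\<in>faces N cr lr. bad_face N ov F \<longrightarrow> b \<in> fst ` F)
         \<and> card {F\<in>faces N cr lr. bad_face N ov F} \<le> 2"
proof -
  interpret ascending_diagram N cr ov lr b
    using assms by (simp add: ascending_diagram_def ascending_diagram_axioms_def diagram_def)
  show ?thesis
    using bad_face_contains_base card_bad_faces_le_2 by blast
qed

end
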